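(* Let $\Omega\subset\mathbb{R}^n$ be a non-empty, bounded, connected, open set with closure $\overline{\Omega}$. Let $J\in C(\overline{\Omega}\times\overline{\Omega})$, let $S\in C^\infty(\mathbb{R})$ have bounded $k$th derivative for every $k\in\{0,1,2,\dots\}$, and let $\tau\in C(\overline{\Omega}\times\overline{\Omega})$ be non-negative and not identically zero. Put $h:=\sup_{\overline{\Omega}\times\overline{\Omega}}\tau$, $Y:=C(\overline{\Omega})$ with supremum norm and $X:=C([-h,0];Y)$ with supremum norm. Let $\alpha>0$ and define $F:X\to Y$ by $$F(\phi):=-\alpha\phi(0)+G(\phi),\qquad G(\phi)(\mathbf{r})=\int_{\overline{\Omega}}J(\mathbf{r},\mathbf{r}')S\big(\phi(-\tau(\mathbf{r},\mathbf{r}'),\mathbf{r}')\big)\,d\mathbf{r}'.$$ Then $F$ is globally Lipschitz continuous.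
   Context: For $\phi\in X$ one writes $\phi(t,\mathbf{r}):=\phi(t)(\mathbf{r})$. $G$ maps $X$ into $Y$. *)

theory Defs
  imports "HOL-Analysis.Analysis"
begin

definition smooth_bounded_derivs :: "(real \<Rightarrow> real) \<Rightarrow> bool" where
  "smooth_bounded_derivs S \<longleftrightarrow>
     (\<exists>Ds :: nat \<Rightarrow> real \<Rightarrow> real. Ds 0 = S \<and>
        (\<forall>k x. (Ds k has_real_derivative Ds (Suc k) x) (at x)) \<and>
        (\<forall>k. bounded (range (Ds k))))"

definition inY :: "'a::euclidean_space set \<Rightarrow> ('a \<Rightarrow> real) \<Rightarrow> bool" where
  "inY \<Omega> f \<longleftrightarrow> continuous_on (closure \<Omega>) f"

definition normY :: "'a::euclidean_space set \<Rightarrow> ('a \<Rightarrow> real) \<Rightarrow> real" where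
  "normY \<Omega> f = (SUP r\<in>closure \<Omega>. \<bar>f r\<bar>)"

definition inX :: "real \<Rightarrow> 'a::euclidean_space set \<Rightarrow> (real \<Rightarrow> 'a \<Rightarrow> real) \<Rightarrow> bool" where
  "inX h \<Omega> \<phi> \<longleftrightarrow> (\<forall>t\<in>{-h..0}. inY \<Omega> (\<phi> t)) \<and>
     (\<forall>t\<in>{-h..0}. \<forall>e>0. \<exists>d>0. \<forall>s\<in>{-h..0}. \<bar>s - t\<bar> < d \<longrightarrow>
         normY \<Omega> (\<lambda>r. \<phi> s r - \<phi> t r) < e)"

definition normX :: "real \<Rightarrow> 'a::euclidean_space set \<Rightarrow> (real \<Rightarrow> 'a \<Rightarrow> real) \<Rightarrow> real" where
  "normX h \<Omega> \<phi> = (SUP t\<in>{-h..0}. normY \<Omega> (\<phi> t))"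

definition Gop :: "'a::euclidean_space set \<Rightarrow> ('a \<Rightarrow> 'a \<Rightarrow> real) \<Rightarrow> (real \<Rightarrow> real)
    \<Rightarrow> ('a \<Rightarrow> 'a \<Rightarrow> real) \<Rightarrow> (real \<Rightarrow> 'a \<Rightarrow> real) \<Rightarrow> 'a \<Rightarrow> real" where
  "Gop \<Omega> J S \<tau> \<phi> r = integral (closure \<Omega>) (\<lambda>r'. J r r' * S (\<phi> (- \<tau> r r') r'))"

definition Fop :: "'a::euclidean_space set \<Rightarrow> real \<Rightarrow> ('a \<Rightarrow> 'a \<Rightarrow> real) \<Rightarrow> (real \<Rightarrow> real)
    \<Rightarrow> ('a \<Rightarrow> 'a \<Rightarrow> real) \<Rightarrow> (real \<Rightarrow> 'a \<Rightarrow> real) \<Rightarrow> 'a \<Rightarrow> real" where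
  "Fop \<Omega> \<alpha> J S \<tau> \<phi> r = - \<alpha> * \<phi> 0 r + Gop \<Omega> J S \<tau> \<phi> r"

end

theory Submission
  imports Defs
begin

text \<open>The mean value theorem makes \<open>S\<close> Lipschitz with constant \<open>M = sup |S'|\<close>, and the delay
  \<open>-\<tau>(r,r')\<close> lies in \<open>[-h,0]\<close>, so the integrands of \<open>G(\<phi>)(r)\<close> and \<open>G(\<psi>)(r)\<close> differ by at most
  \<open>sup |J| \<cdot> M \<cdot> \<parallel>\<phi> - \<psi>\<parallel>\<^sub>X\<close>. Integrating over the compact set \<open>closure \<Omega>\<close> gives \<open>F\<close> the Lipschitz
  constant \<open>\<alpha> + sup |J| \<cdot> M \<cdot> |closure \<Omega>|\<close>. The suprema defining the norms are finite because all
  functions involved are continuous on compact sets; for \<open>\<phi> \<in> X\<close> this rests on the joint continuity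
  of \<open>(t, r) \<mapsto> \<phi>(t, r)\<close>.\<close>

lemma abs_le_normY:
  assumes "bounded \<Omega>" "continuous_on (closure \<Omega>) f" "r \<in> closure \<Omega>"
  shows "\<bar>f r\<bar> \<le> normY \<Omega> f"
proof -
  have "compact ((\<lambda>r. \<bar>f r\<bar>) ` closure \<Omega>)"
    by (intro compact_continuous_image continuous_intros assms) (simp add: assms compact_closure)
  then have "bdd_above ((\<lambda>r. \<bar>f r\<bar>) ` closure \<Omega>)"
    by (meson bounded_imp_bdd_above compact_imp_bounded)
  then show ?thesis
    unfolding normY_def by (rule cSUP_upper[OF assms(3)])
qed

lemma normY_le:
  assumes "\<Omega> \<noteq> {}" "\<And>r. r \<in> closure \<Omega> \<Longrightarrow> \<bar>f r\<bar> \<le> B"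
  shows "normY \<Omega> f \<le> B"
  unfolding normY_def using assms by (intro cSUP_least) auto

lemma continuous_on_slice:
  assumes "continuous_on (A \<times> B) (case_prod f)" "a \<in> A"
  shows "continuous_on B (f a)"
proof -
  have "continuous_on B (\<lambda>b. case_prod f (a, b))"
    by (rule continuous_on_compose2[OF assms(1)]) (use assms(2) in \<open>auto intro: continuous_intros\<close>)
  then show ?thesis by simp
qed

lemma continuous_on_case_prod_if_inX:
  assumes "inX h \<Omega> \<phi>" "bounded \<Omega>"
  shows "continuous_on ({-h..0} \<times> closure \<Omega>) (case_prod \<phi>)"
  unfolding continuous_on_iff
proof (intro ballI allI impI)
  fix p and e :: real
  assume p: "p \<in> {-h..0} \<times> closure \<Omega>" and e: "0 < e"
  obtain t0 r0 where p_eq: "p = (t0, r0)" and t0: "t0 \<in> {-h..0}" and r0: "r0 \<in> closure \<Omega>"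
    using p by auto
  obtain d1 where d1: "d1 > 0"
    "\<forall>s\<in>{-h..0}. \<bar>s - t0\<bar> < d1 \<longrightarrow> normY \<Omega> (\<lambda>r. \<phi> s r - \<phi> t0 r) < e/2"
    using assms(1) t0 e unfolding inX_def by (meson half_gt_zero)
  have cont_t0: "continuous_on (closure \<Omega>) (\<phi> t0)"
    using assms(1) t0 unfolding inX_def inY_def by auto
  then obtain d2 where d2: "d2 > 0"
    "\<forall>r\<in>closure \<Omega>. dist r r0 < d2 \<longrightarrow> dist (\<phi> t0 r) (\<phi> t0 r0) < e/2"
    using r0 e unfolding continuous_on_iff by (meson half_gt_zero)
  show "\<exists>d>0. \<forall>q\<in>{-h..0} \<times> closure \<Omega>. dist q p < d \<longrightarrow> dist (case_prod \<phi> q) (case_prod \<phi> p) < e"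
  proof (intro exI[of _ "min d1 d2"] conjI ballI impI)
    show "0 < min d1 d2" using d1 d2 by simp
    fix q assume q: "q \<in> {-h..0} \<times> closure \<Omega>" and dq: "dist q p < min d1 d2"
    obtain s r where q_eq: "q = (s, r)" and s: "s \<in> {-h..0}" and r: "r \<in> closure \<Omega>"
      using q by auto
    have "dist s t0 < d1" using dist_fst_le[of q p] dq q_eq p_eq by auto
    then have time_close: "normY \<Omega> (\<lambda>r. \<phi> s r - \<phi> t0 r) < e/2"
      using d1 s by (simp add: dist_real_def)
    have "continuous_on (closure \<Omega>) (\<phi> s)" using assms(1) s unfolding inX_def inY_def by auto
    then have "\<bar>\<phi> s r - \<phi> t0 r\<bar> \<le> normY \<Omega> (\<lambda>r. \<phi> s r - \<phi> t0 r)"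
      by (intro abs_le_normY assms(2) continuous_on_diff cont_t0 r)
    moreover have "dist r r0 < d2" using dist_snd_le[of q p] dq q_eq p_eq by auto
    then have "dist (\<phi> t0 r) (\<phi> t0 r0) < e/2" using d2 r by auto
    ultimately show "dist (case_prod \<phi> q) (case_prod \<phi> p) < e"
      using time_close q_eq p_eq abs_triangle_ineq[of "\<phi> s r - \<phi> t0 r" "\<phi> t0 r - \<phi> t0 r0"]
      by (simp add: dist_real_def)
  qed
qed

lemma abs_le_normX:
  assumes "bounded \<Omega>" "continuous_on ({-h..0} \<times> closure \<Omega>) (case_prod f)"
    and "t \<in> {-h..0}" "r \<in> closure \<Omega>"
  shows "\<bar>f t r\<bar> \<le> normX h \<Omega> f"
proof -
  have "compact ({-h..0} \<times> closure \<Omega>)"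
    using assms(1) by (simp add: compact_Times compact_closure)
  then obtain B where B: "\<And>p. p \<in> {-h..0} \<times> closure \<Omega> \<Longrightarrow> \<bar>case_prod f p\<bar> \<le> B"
    using compact_imp_bounded[OF compact_continuous_image[OF assms(2)]]
    unfolding bounded_iff by fastforce
  have "bdd_above ((\<lambda>s. normY \<Omega> (f s)) ` {-h..0})"
  proof (rule bdd_aboveI2)
    fix s assume "s \<in> {-h..0}"
    then show "normY \<Omega> (f s) \<le> B"
      unfolding normY_def using assms(4) B by (intro cSUP_least) auto
  qed
  then have "normY \<Omega> (f t) \<le> normX h \<Omega> f"
    unfolding normX_def by (rule cSUP_upper[OF assms(3)])
  with abs_le_normY[OF assms(1) continuous_on_slice[OF assms(2,3)] assms(4)] show ?thesis
    by linarith
qed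

lemma lipschitz_if_smooth_bounded_derivs:
  assumes "smooth_bounded_derivs S"
  obtains M where "M-lipschitz_on UNIV S"
proof -
  obtain Ds where "Ds 0 = S" and "\<And>k x. (Ds k has_real_derivative Ds (Suc k) x) (at x)"
    and "bounded (range (Ds (Suc 0)))"
    using assms unfolding smooth_bounded_derivs_def by blast
  then obtain M where M: "\<And>x. \<bar>Ds (Suc 0) x\<bar> \<le> M" and S': "\<And>x. (S has_real_derivative Ds (Suc 0) x) (at x)"
    unfolding bounded_iff by (metis real_norm_def rangeI)
  have "\<bar>S x - S y\<bar> \<le> M * \<bar>x - y\<bar>" for x y
    using field_differentiable_bound[of UNIV S "Ds (Suc 0)" M x y] S' M
    by (auto intro: has_field_derivative_at_within)
  moreover have "0 \<le> M" using M[of 0] by linarith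
  ultimately have "M-lipschitz_on UNIV S"
    by (simp add: lipschitz_on_def dist_real_def)
  then show ?thesis by (rule that)
qed

lemma integrable_on_compact_if_continuous:
  fixes f :: "'a::euclidean_space \<Rightarrow> real"
  assumes "compact K" "continuous_on K f"
  shows "f integrable_on K"
proof -
  obtain B where B: "\<And>x. x \<in> K \<Longrightarrow> norm (f x) \<le> B"
    using compact_imp_bounded[OF compact_continuous_image[OF assms(2,1)]]
    unfolding bounded_iff by auto
  have K: "K \<in> sets lebesgue"
    using lmeasurable_compact[OF assms(1)] by (simp add: fmeasurableD)
  have "f absolutely_integrable_on K"
    by (rule measurable_bounded_by_integrable_imp_absolutely_integrable[OF
          continuous_imp_measurable_on_sets_lebesgue[OF assms(2) K] K
          integrable_on_const[OF lmeasurable_compact[OF assms(1)]] B])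
  then show ?thesis
    using absolutely_integrable_on_def by blast
qed

lemma integrable_on_delay_integrand:
  fixes J \<tau> :: "'a::euclidean_space \<Rightarrow> 'a \<Rightarrow> real" and h :: real
  assumes "bounded \<Omega>"
    and "continuous_on (closure \<Omega>) (J r)" "continuous_on (closure \<Omega>) (\<tau> r)"
    and "\<And>r'. r' \<in> closure \<Omega> \<Longrightarrow> 0 \<le> \<tau> r r' \<and> \<tau> r r' \<le> h"
    and "continuous_on UNIV S"
    and "continuous_on ({-h..0} \<times> closure \<Omega>) (case_prod \<phi>)"
  shows "(\<lambda>r'. J r r' * S (\<phi> (- \<tau> r r') r')) integrable_on closure \<Omega>"
proof -
  have "(\<lambda>r'. (- \<tau> r r', r')) ` closure \<Omega> \<subseteq> {-h..0} \<times> closure \<Omega>"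
    using assms(4) by force
  moreover have "continuous_on (closure \<Omega>) (\<lambda>r'. (- \<tau> r r', r'))"
    using assms(3) by (intro continuous_intros)
  ultimately have "continuous_on (closure \<Omega>) (\<lambda>r'. \<phi> (- \<tau> r r') r')"
    using continuous_on_compose2[OF assms(6)] by fastforce
  then have "continuous_on (closure \<Omega>) (\<lambda>r'. S (\<phi> (- \<tau> r r') r'))"
    using continuous_on_compose2[OF assms(5)] by blast
  then show ?thesis
    using assms(1,2) by (intro integrable_on_compact_if_continuous continuous_on_mult) auto
qed

lemma Gop_diff_le:
  fixes J \<tau> :: "'a::euclidean_space \<Rightarrow> 'a \<Rightarrow> real"
  assumes "bounded \<Omega>"
    and "continuous_on (closure \<Omega>) (J r)" "continuous_on (closure \<Omega>) (\<tau> r)"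
    and \<tau>_range: "\<And>r'. r' \<in> closure \<Omega> \<Longrightarrow> 0 \<le> \<tau> r r' \<and> \<tau> r r' \<le> h"
    and J_bound: "\<And>r'. r' \<in> closure \<Omega> \<Longrightarrow> \<bar>J r r'\<bar> \<le> B"
    and S_lip: "M-lipschitz_on UNIV S"
    and "continuous_on ({-h..0} \<times> closure \<Omega>) (case_prod \<phi>)"
    and "continuous_on ({-h..0} \<times> closure \<Omega>) (case_prod \<psi>)"
    and diff_bound: "\<And>t r'. t \<in> {-h..0} \<Longrightarrow> r' \<in> closure \<Omega> \<Longrightarrow> \<bar>\<phi> t r' - \<psi> t r'\<bar> \<le> N"
  shows "\<bar>Gop \<Omega> J S \<tau> \<phi> r - Gop \<Omega> J S \<tau> \<psi> r\<bar> \<le> B * M * measure lebesgue (closure \<Omega>) * N"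
proof -
  define K where "K = closure \<Omega>"
  have "continuous_on UNIV S" using S_lip by (rule lipschitz_on_continuous_on)
  then have int_\<phi>: "(\<lambda>r'. J r r' * S (\<phi> (- \<tau> r r') r')) integrable_on K"
    and int_\<psi>: "(\<lambda>r'. J r r' * S (\<psi> (- \<tau> r r') r')) integrable_on K"
    using assms unfolding K_def by (blast intro: integrable_on_delay_integrand)+
  have pointwise: "\<bar>J r r' * S (\<phi> (- \<tau> r r') r') - J r r' * S (\<psi> (- \<tau> r r') r')\<bar> \<le> B * M * N"
    if r': "r' \<in> K" for r'
  proof -
    have "- \<tau> r r' \<in> {-h..0}" using \<tau>_range r' unfolding K_def by auto
    then have "\<bar>S (\<phi> (- \<tau> r r') r') - S (\<psi> (- \<tau> r r') r')\<bar> \<le> M * N"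
      using lipschitz_onD[OF S_lip, of "\<phi> (- \<tau> r r') r'" "\<psi> (- \<tau> r r') r'"]
        diff_bound r' lipschitz_on_nonneg[OF S_lip]
      unfolding K_def dist_real_def by (meson UNIV_I mult_left_mono order_trans)
    moreover have "\<bar>J r r'\<bar> \<le> B" using J_bound r' unfolding K_def by blast
    ultimately show ?thesis
      by (simp add: abs_mult mult_mono' mult.assoc flip: right_diff_distrib)
  qed
  have "\<bar>Gop \<Omega> J S \<tau> \<phi> r - Gop \<Omega> J S \<tau> \<psi> r\<bar>
      = \<bar>integral K (\<lambda>r'. J r r' * S (\<phi> (- \<tau> r r') r') - J r r' * S (\<psi> (- \<tau> r r') r'))\<bar>"
    unfolding Gop_def K_def[symmetric] by (simp add: integral_diff[OF int_\<phi> int_\<psi>])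
  also have "\<dots> \<le> integral K (\<lambda>_. B * M * N)"
  proof -
    have "(\<lambda>_. B * M * N) integrable_on K"
      using assms(1) by (intro integrable_on_const lmeasurable_compact) (simp add: K_def)
    from integral_norm_bound_integral[OF integrable_diff[OF int_\<phi> int_\<psi>] this] pointwise
    show ?thesis by simp
  qed
  also have "\<dots> = B * M * N * integral K (\<lambda>_. 1)"
    using integral_mult_right[of K "B * M * N" "\<lambda>_. 1"] by simp
  also have "\<dots> = B * M * measure lebesgue K * N"
    using lmeasure_integral[OF lmeasurable_compact, of K] assms(1) by (simp add: K_def)
  finally show ?thesis unfolding K_def .
qed

lemma normY_Fop_diff_le:
  fixes J \<tau> :: "'a::euclidean_space \<Rightarrow> 'a \<Rightarrow> real"
  assumes "\<Omega> \<noteq> {}" "bounded \<Omega>" "0 \<le> \<alpha>"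
    and J_cont: "\<And>r. r \<in> closure \<Omega> \<Longrightarrow> continuous_on (closure \<Omega>) (J r)"
    and \<tau>_cont: "\<And>r. r \<in> closure \<Omega> \<Longrightarrow> continuous_on (closure \<Omega>) (\<tau> r)"
    and \<tau>_range: "\<And>r r'. r \<in> closure \<Omega> \<Longrightarrow> r' \<in> closure \<Omega> \<Longrightarrow> 0 \<le> \<tau> r r' \<and> \<tau> r r' \<le> h"
    and J_bound: "\<And>r r'. r \<in> closure \<Omega> \<Longrightarrow> r' \<in> closure \<Omega> \<Longrightarrow> \<bar>J r r'\<bar> \<le> B"
    and S_lip: "M-lipschitz_on UNIV S"
    and "inX h \<Omega> \<phi>" "inX h \<Omega> \<psi>"
  shows "normY \<Omega> (\<lambda>r. Fop \<Omega> \<alpha> J S \<tau> \<phi> r - Fop \<Omega> \<alpha> J S \<tau> \<psi> r)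
    \<le> (\<alpha> + B * M * measure lebesgue (closure \<Omega>)) * normX h \<Omega> (\<lambda>t r. \<phi> t r - \<psi> t r)"
proof -
  define N where "N = normX h \<Omega> (\<lambda>t r. \<phi> t r - \<psi> t r)"
  have cont_\<phi>: "continuous_on ({-h..0} \<times> closure \<Omega>) (case_prod \<phi>)"
    and cont_\<psi>: "continuous_on ({-h..0} \<times> closure \<Omega>) (case_prod \<psi>)"
    using assms(2,9,10) by (blast intro: continuous_on_case_prod_if_inX)+
  have diff_bound: "\<bar>\<phi> t r - \<psi> t r\<bar> \<le> N" if "t \<in> {-h..0}" "r \<in> closure \<Omega>" for t r
    unfolding N_def
    by (rule abs_le_normX[OF assms(2) _ that, of "\<lambda>t r. \<phi> t r - \<psi> t r", simplified])
      (use continuous_on_diff[OF cont_\<phi> cont_\<psi>] in \<open>simp add: case_prod_beta'\<close>)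
  have "\<bar>Fop \<Omega> \<alpha> J S \<tau> \<phi> r - Fop \<Omega> \<alpha> J S \<tau> \<psi> r\<bar> \<le> (\<alpha> + B * M * measure lebesgue (closure \<Omega>)) * N"
    if r: "r \<in> closure \<Omega>" for r
  proof -
    have "0 \<in> {-h..0}" using \<tau>_range[OF r r] by simp
    have "\<bar>Fop \<Omega> \<alpha> J S \<tau> \<phi> r - Fop \<Omega> \<alpha> J S \<tau> \<psi> r\<bar>
        = \<bar>- \<alpha> * (\<phi> 0 r - \<psi> 0 r) + (Gop \<Omega> J S \<tau> \<phi> r - Gop \<Omega> J S \<tau> \<psi> r)\<bar>"
      unfolding Fop_def by (simp add: algebra_simps)
    also have "\<dots> \<le> \<alpha> * \<bar>\<phi> 0 r - \<psi> 0 r\<bar> + \<bar>Gop \<Omega> J S \<tau> \<phi> r - Gop \<Omega> J S \<tau> \<psi> r\<bar>"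
      using assms(3) abs_triangle_ineq[of "- \<alpha> * (\<phi> 0 r - \<psi> 0 r)"] by (simp add: abs_mult)
    also have "\<dots> \<le> \<alpha> * N + B * M * measure lebesgue (closure \<Omega>) * N"
      using Gop_diff_le[where J = J and \<tau> = \<tau> and r = r, OF assms(2) J_cont[OF r] \<tau>_cont[OF r]
          \<tau>_range[OF r] J_bound[OF r] S_lip cont_\<phi> cont_\<psi> diff_bound]
        diff_bound[OF \<open>0 \<in> {-h..0}\<close> r] assms(3)
      by (intro add_mono mult_left_mono) auto
    finally show ?thesis by (simp add: algebra_simps)
  qed
  then show ?thesis
    unfolding N_def[symmetric] using assms(1) by (intro normY_le) auto
qed

theorem lemma2p3:
  fixes \<Omega> :: "'a::euclidean_space set"
    and J \<tau> :: "'a \<Rightarrow> 'a \<Rightarrow> real" and S :: "real \<Rightarrow> real"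
    and \<alpha> h :: real
  assumes "\<Omega> \<noteq> {}" and "bounded \<Omega>" and "connected \<Omega>" and "open \<Omega>"
    and "continuous_on (closure \<Omega> \<times> closure \<Omega>) (\<lambda>(r, r'). J r r')"
    and "smooth_bounded_derivs S"
    and "continuous_on (closure \<Omega> \<times> closure \<Omega>) (\<lambda>(r, r'). \<tau> r r')"
    and "\<forall>r\<in>closure \<Omega>. \<forall>r'\<in>closure \<Omega>. 0 \<le> \<tau> r r'"
    and "\<exists>r\<in>closure \<Omega>. \<exists>r'\<in>closure \<Omega>. \<tau> r r' \<noteq> 0"
    and "h = (SUP p\<in>closure \<Omega> \<times> closure \<Omega>. \<tau> (fst p) (snd p))"
    and "\<alpha> > 0"
  shows "\<exists>L. \<forall>\<phi> \<psi>. inX h \<Omega> \<phi> \<longrightarrow> inX h \<Omega> \<psi> \<longrightarrow>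
           normY \<Omega> (\<lambda>r. Fop \<Omega> \<alpha> J S \<tau> \<phi> r - Fop \<Omega> \<alpha> J S \<tau> \<psi> r)
             \<le> L * normX h \<Omega> (\<lambda>t r. \<phi> t r - \<psi> t r)"
proof -
  let ?K = "closure \<Omega>"
  have compact_KK: "compact (?K \<times> ?K)"
    using assms(2) by (simp add: compact_Times compact_closure)
  obtain B where "\<forall>x\<in>case_prod J ` (?K \<times> ?K). \<bar>x\<bar> \<le> B"
    using compact_imp_bounded[OF compact_continuous_image[OF assms(5) compact_KK]]
    unfolding bounded_iff real_norm_def by blast
  then have J_bound: "\<And>r r'. r \<in> ?K \<Longrightarrow> r' \<in> ?K \<Longrightarrow> \<bar>J r r'\<bar> \<le> B"
    by (metis SigmaI case_prod_conv image_eqI)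
  have "bdd_above (case_prod \<tau> ` (?K \<times> ?K))"
    using compact_imp_bounded[OF compact_continuous_image[OF assms(7) compact_KK]]
    by (rule bounded_imp_bdd_above)
  then have "\<tau> r r' \<le> h" if "r \<in> ?K" "r' \<in> ?K" for r r'
    using cSUP_upper[of "(r, r')" "?K \<times> ?K" "case_prod \<tau>"] that assms(10)
    by (simp add: case_prod_beta')
  then have \<tau>_range: "\<And>r r'. r \<in> ?K \<Longrightarrow> r' \<in> ?K \<Longrightarrow> 0 \<le> \<tau> r r' \<and> \<tau> r r' \<le> h"
    using assms(8) by blast
  obtain M where S_lip: "M-lipschitz_on UNIV S"
    using lipschitz_if_smooth_bounded_derivs[OF assms(6)] .
  have "normY \<Omega> (\<lambda>r. Fop \<Omega> \<alpha> J S \<tau> \<phi> r - Fop \<Omega> \<alpha> J S \<tau> \<psi> r)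
      \<le> (\<alpha> + B * M * measure lebesgue ?K) * normX h \<Omega> (\<lambda>t r. \<phi> t r - \<psi> t r)"
    if "inX h \<Omega> \<phi>" "inX h \<Omega> \<psi>" for \<phi> \<psi>
    using normY_Fop_diff_le[OF assms(1,2) less_imp_le[OF assms(11)] continuous_on_slice[OF assms(5)]
        continuous_on_slice[OF assms(7)] \<tau>_range J_bound S_lip that] .
  then show ?thesis by blast
qed

end
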